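(* Let $\mathfrak A$ be a finite dimensional $C^*$-algebra and $\Phi:\mathfrak A\to\mathfrak A$ a (not necessarily unital) $*$-endomorphism. Then $\sigma(\Phi)\subset\{0\}\cup\mathbb T$.
   Context: $\sigma(\Phi)$ is the spectrum (set of eigenvalues) of the linear map $\Phi$ on $\mathfrak A$; $\mathbb T=\{\lambda\in\mathbb C:|\lambda|=1\}$. *)

theory Defs
  imports "HOL-Analysis.Analysis"
begin

class cstar_algebra = real_normed_algebra + banach +
  fixes scaleC :: "complex \<Rightarrow> 'a \<Rightarrow> 'a"
    and cstar :: "'a \<Rightarrow> 'a"
  assumes scaleC_add_right: "scaleC a (x + y) = scaleC a x + scaleC a y"
    and scaleC_add_left: "scaleC (a + b) x = scaleC a x + scaleC b x"
    and scaleC_scaleC: "scaleC a (scaleC b x) = scaleC (a * b) x"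
    and scaleC_one: "scaleC 1 x = x"
    and scaleR_scaleC: "scaleR r x = scaleC (complex_of_real r) x"
    and norm_scaleC: "norm (scaleC a x) = cmod a * norm x"
    and mult_scaleC_left: "scaleC a x * y = scaleC a (x * y)"
    and mult_scaleC_right: "x * scaleC a y = scaleC a (x * y)"
    and cstar_cstar: "cstar (cstar x) = x"
    and cstar_add: "cstar (x + y) = cstar x + cstar y"
    and cstar_scaleC: "cstar (scaleC a x) = scaleC (cnj a) (cstar x)"
    and cstar_mult: "cstar (x * y) = cstar y * cstar x"
    and cstar_identity: "norm (cstar x * x) = (norm x)\<^sup>2"

definition cfinite_dim :: "'a::cstar_algebra itself \<Rightarrow> bool" where
  "cfinite_dim _ \<longleftrightarrow> (\<exists>B::'a set. finite B \<and>
      (\<forall>x. \<exists>c. x = (\<Sum>b\<in>B. scaleC (c b) b)))"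

definition star_endomorphism :: "('a::cstar_algebra \<Rightarrow> 'a) \<Rightarrow> bool" where
  "star_endomorphism \<Phi> \<longleftrightarrow>
     (\<forall>x y. \<Phi> (x + y) = \<Phi> x + \<Phi> y) \<and>
     (\<forall>a x. \<Phi> (scaleC a x) = scaleC a (\<Phi> x)) \<and>
     (\<forall>x y. \<Phi> (x * y) = \<Phi> x * \<Phi> y) \<and>
     (\<forall>x. \<Phi> (cstar x) = cstar (\<Phi> x))"

definition lin_spectrum :: "('a::cstar_algebra \<Rightarrow> 'a) \<Rightarrow> complex set" where
  "lin_spectrum \<Phi> = {c. \<exists>x. x \<noteq> 0 \<and> \<Phi> x = scaleC c x}"

end

theory Submission
  imports Defs
begin

text \<open>If \<open>\<Phi> x = c x\<close> with \<open>x \<noteq> 0\<close>, then \<open>y = x\<^sup>* x\<close> is a self-adjoint eigenvector for the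
eigenvalue \<open>r = \<bar>c\<bar>\<^sup>2\<close>, and its repeated squares \<open>y^(2^k)\<close> are eigenvectors for \<open>r^(2^k)\<close>.
They never vanish, because the C*-identity gives \<open>\<parallel>y^(2^k)\<parallel> = \<parallel>y\<parallel>^(2^k)\<close>. Unless
\<open>r \<in> {0, 1}\<close> these eigenvalues are pairwise distinct, which yields infinitely many linearly
independent vectors, impossible in finite dimension.\<close>

interpretation complex_vs: vector_space "scaleC :: complex \<Rightarrow> 'a::cstar_algebra \<Rightarrow> 'a"
  by unfold_locales (simp_all add: scaleC_add_right scaleC_add_left scaleC_scaleC scaleC_one)

lemma (in vector_space) independent_finite_eigenvectors:
  assumes "module_hom scale scale f" and "finite S" and "0 \<notin> S"
    and "\<And>v. v \<in> S \<Longrightarrow> f v = scale (e v) v" and "inj_on e S"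
  shows "independent S"
  using assms(2-)
proof (induction S rule: finite_induct)
  case empty
  show ?case by (rule independent_empty)
next
  case (insert a S)
  interpret f: module_hom scale scale f by (fact assms(1))
  have indep: "independent S" using insert by (simp add: inj_on_insert)
  have "a \<notin> span S"
  proof
    assume "a \<in> span S"
    then obtain u where a: "a = (\<Sum>v\<in>S. scale (u v) v)"
      using span_finite[OF \<open>finite S\<close>] by auto
    have "(\<Sum>v\<in>S. scale (u v * e v) v) = f a"
      using insert.prems(2) by (simp add: a f.sum f.scale)
    also have "\<dots> = scale (e a) a" using insert.prems(2) by simp
    also have "\<dots> = (\<Sum>v\<in>S. scale (u v * e a) v)"
      by (simp add: a scale_sum_right mult.commute)
    finally have "(\<Sum>v\<in>S. scale (u v * (e v - e a)) v) = 0"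
      by (simp add: right_diff_distrib scale_left_diff_distrib sum_subtractf)
    then have "u v * (e v - e a) = 0" if "v \<in> S" for v
      using independentD[OF indep \<open>finite S\<close> order_refl, of "\<lambda>v. u v * (e v - e a)"] that
      by simp
    moreover have "e v \<noteq> e a" if "v \<in> S" for v
      using insert.prems(3) insert.hyps(2) that by (auto simp: inj_on_def)
    ultimately have "a = 0" by (simp add: a)
    then show False using insert.prems(1) by simp
  qed
  then show ?case using indep by (rule independent_insertI)
qed

lemma (in vector_space) independent_eigenvectors:
  assumes "module_hom scale scale f" and "0 \<notin> S"
    and "\<And>v. v \<in> S \<Longrightarrow> f v = scale (e v) v" and "inj_on e S"
  shows "independent S"
  unfolding independent_explicit_finite_subsets
proof (intro allI impI)
  fix T u assume "T \<subseteq> S" "finite T" "(\<Sum>v\<in>T. scale (u v) v) = 0"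
  moreover have "independent T"
    using assms \<open>T \<subseteq> S\<close> \<open>finite T\<close>
    by (intro independent_finite_eigenvectors[where f = f and e = e]) (auto intro: inj_on_subset)
  ultimately show "\<forall>v\<in>T. u v = 0" using independentD by blast
qed

lemma (in vector_space) independent_eigenvector_family:
  assumes "module_hom scale scale f" and "\<And>i. v i \<noteq> 0"
    and "\<And>i. f (v i) = scale (\<mu> i) (v i)" and "inj \<mu>"
  shows "inj v" and "independent (range v)"
proof -
  show "inj v"
  proof (rule injI)
    fix i j assume "v i = v j"
    then have "scale (\<mu> i) (v i) = scale (\<mu> j) (v i)" by (metis assms(3))
    then show "i = j" using assms(2,4) by (simp add: inj_eq)
  qed
  then have "f w = scale ((\<mu> \<circ> inv v) w) w" if "w \<in> range v" for w
    using that assms(3) by auto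
  moreover have "inj_on (\<mu> \<circ> inv v) (range v)"
    using \<open>inj v\<close> assms(4) by (simp add: comp_inj_on inj_on_inv_into)
  ultimately show "independent (range v)"
    using assms(1,2) by (intro independent_eigenvectors[where f = f]) auto
qed

lemma cfinite_dim_independent_finite:
  assumes "cfinite_dim TYPE('a::cstar_algebra)" and "complex_vs.independent (S :: 'a set)"
  shows "finite S"
proof -
  obtain B :: "'a set" where "finite B" and B: "\<And>x. \<exists>c. x = (\<Sum>b\<in>B. scaleC (c b) b)"
    using assms(1) by (auto simp: cfinite_dim_def)
  have "S \<subseteq> complex_vs.span B"
    using B by (metis complex_vs.span_finite[OF \<open>finite B\<close>] UNIV_I image_eqI subsetI)
  then show ?thesis
    using complex_vs.independent_span_bound[OF \<open>finite B\<close> assms(2)] by simp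
qed

lemma star_endomorphism_module_hom:
  assumes "star_endomorphism \<Phi>"
  shows "module_hom scaleC scaleC \<Phi>"
  using assms unfolding star_endomorphism_def
  by (intro module_hom.intro module_hom_axioms.intro complex_vs.module_axioms) auto

fun square_iter :: "'a::times \<Rightarrow> nat \<Rightarrow> 'a" where
  "square_iter x 0 = x"
| "square_iter x (Suc k) = square_iter x k * square_iter x k"

lemma cstar_square_iter:
  "cstar y = y \<Longrightarrow> cstar (square_iter y k) = square_iter y k"
  by (induction k) (simp_all add: cstar_mult)

lemma norm_square_iter:
  fixes y :: "'a::cstar_algebra"
  assumes "cstar y = y"
  shows "norm (square_iter y k) = norm y ^ 2 ^ k"
proof (induction k)
  case (Suc k)
  have "norm (square_iter y (Suc k)) = norm (cstar (square_iter y k) * square_iter y k)"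
    using cstar_square_iter[OF assms] by simp
  also have "\<dots> = (norm y ^ 2 ^ k)\<^sup>2" by (simp add: cstar_identity Suc.IH)
  finally show ?case by (simp add: power_mult[symmetric] mult.commute)
qed simp

lemma square_iter_eigenvector:
  fixes \<Phi> :: "'a::cstar_algebra \<Rightarrow> 'a"
  assumes "\<And>a b. \<Phi> (a * b) = \<Phi> a * \<Phi> b" and "\<Phi> y = scaleC c y"
  shows "\<Phi> (square_iter y k) = scaleC (c ^ 2 ^ k) (square_iter y k)"
  by (induction k) (simp_all add: assms mult_scaleC_left mult_scaleC_right scaleC_scaleC
      power_add[symmetric] mult_2)

lemma star_endomorphism_eigenvector_cstar_mult:
  assumes "star_endomorphism \<Phi>" and "\<Phi> x = scaleC c x"
  shows "\<Phi> (cstar x * x) = scaleC (complex_of_real ((cmod c)\<^sup>2)) (cstar x * x)"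
proof -
  have "\<Phi> (cstar x * x) = cstar (\<Phi> x) * \<Phi> x"
    using assms(1) by (simp add: star_endomorphism_def)
  also have "\<dots> = scaleC (cnj c * c) (cstar x * x)"
    by (simp add: assms(2) cstar_scaleC mult_scaleC_left mult_scaleC_right scaleC_scaleC)
  also have "cnj c * c = complex_of_real ((cmod c)\<^sup>2)"
    by (metis complex_norm_square mult.commute)
  finally show ?thesis .
qed

theorem proposition3p6:
  fixes \<Phi> :: "'a::cstar_algebra \<Rightarrow> 'a"
  assumes "cfinite_dim TYPE('a)"
    and "star_endomorphism \<Phi>"
  shows "lin_spectrum \<Phi> \<subseteq> {0} \<union> {z. cmod z = 1}"
proof
  fix c assume "c \<in> lin_spectrum \<Phi>"
  then obtain x where "x \<noteq> 0" and x: "\<Phi> x = scaleC c x" by (auto simp: lin_spectrum_def)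
  define y where "y = cstar x * x"
  define r where "r = (cmod c)\<^sup>2"
  have y_self_adjoint: "cstar y = y" by (simp add: y_def cstar_mult cstar_cstar)
  have "norm y \<noteq> 0" using \<open>x \<noteq> 0\<close> by (simp add: y_def cstar_identity)
  then have nonzero: "square_iter y k \<noteq> 0" for k
    by (metis norm_square_iter[OF y_self_adjoint] norm_zero power_eq_0_iff)
  have "\<Phi> y = scaleC (complex_of_real r) y"
    unfolding y_def r_def by (rule star_endomorphism_eigenvector_cstar_mult[OF assms(2) x])
  then have eigen:
    "\<Phi> (square_iter y k) = scaleC (complex_of_real (r ^ 2 ^ k)) (square_iter y k)" for k
    using square_iter_eigenvector[of \<Phi>] assms(2) by (simp add: star_endomorphism_def)
  show "c \<in> {0} \<union> {z. cmod z = 1}"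
  proof (rule ccontr)
    assume "c \<notin> {0} \<union> {z. cmod z = 1}"
    then have "0 < r" and "r \<noteq> 1"
      by (auto simp: r_def power2_eq_1_iff) (use norm_ge_zero[of c] in linarith)
    then have "inj (\<lambda>k. complex_of_real (r ^ 2 ^ k))"
      by (auto intro!: injI simp: power_inject_exp' simp del: of_real_power)
    with star_endomorphism_module_hom[OF assms(2)] nonzero eigen
    have "inj (square_iter y)" and "complex_vs.independent (range (square_iter y))"
      by (rule complex_vs.independent_eigenvector_family)+
    then show False
      using cfinite_dim_independent_finite[OF assms(1)] finite_imageD infinite_UNIV_nat by blast
  qed
qed

end
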